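(* Let $G$ be a finite simple connected graph with at least one edge, let $W$ be a minimal vertex cover of $G$, and let $s\ge 0$. Then the ideal $\mathfrak p=\langle\mathcal{J}_s(W)\rangle\subseteq\mathcal{J}_s(R)$ is a minimal prime of $\mathcal{J}_s(I(G))$, and the $\mathfrak p$-primary component of $\mathcal{J}_s(I(G))$ is $\mathfrak p$ itself.
   Context: $R=k[x_1,\dots,x_n]$ over a field $k$, with the vertices of $G$ identified with the variables. The edge ideal is $I(G)=\langle x_ix_j : \{x_i,x_j\}\in E(G)\rangle$. A vertex cover is a set of vertices meeting every edge; minimal if no proper subset is a vertex cover. $\mathcal{J}_s(R)=k[x_i^{(l)} : 1\le i\le n,\ 0\le l\le s]$. For $I=\langle f_1,\dots,f_r\rangle\subseteq R$, write $f_m(x_1^{(0)}+x_1^{(1)}t+\cdots+x_1^{(s)}t^s,\dots)\equiv\sum_{l=0}^s\alpha_m^{(l)}t^l \pmod{t^{s+1}}$; then $\mathcal{J}_s(I)=\langle\alpha_m^{(l)}\rangle\subseteq\mathcal{J}_s(R)$. For $W\subseteq V(G)$, $\mathcal{J}_s(W)=\{x^{(j)} : x\in W,\ 0\le j\le s\}$. *)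

theory Defs
  imports "HOL-Library.Poly_Mapping" "HOL-Computational_Algebra.Polynomial"
begin

type_synonym ('a, 'k) mpoly = "('a \<Rightarrow>\<^sub>0 nat) \<Rightarrow>\<^sub>0 'k"

definition Var :: "'a \<Rightarrow> ('a, 'k::comm_ring_1) mpoly" where
  "Var x = Poly_Mapping.single (Poly_Mapping.single x 1) 1"

definition Const :: "'k \<Rightarrow> ('a, 'k::comm_ring_1) mpoly" where
  "Const c = Poly_Mapping.single 0 c"

definition vars :: "('a, 'k::comm_ring_1) mpoly \<Rightarrow> 'a set" where
  "vars p = \<Union> (Poly_Mapping.keys ` Poly_Mapping.keys p)"

definition poly_ring :: "'a set \<Rightarrow> ('a, 'k::comm_ring_1) mpoly set" where
  "poly_ring A = {p. vars p \<subseteq> A}"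

definition ideal_gen :: "'a set \<Rightarrow> ('a, 'k::comm_ring_1) mpoly set \<Rightarrow> ('a, 'k) mpoly set" where
  "ideal_gen A S = {(\<Sum>g\<in>F. c g * g) | F c. finite F \<and> F \<subseteq> S \<and> (\<forall>g\<in>F. c g \<in> poly_ring A)}"

definition is_ideal :: "'a set \<Rightarrow> ('a, 'k::comm_ring_1) mpoly set \<Rightarrow> bool" where
  "is_ideal A I \<longleftrightarrow> I \<subseteq> poly_ring A \<and> 0 \<in> I \<and> (\<forall>x\<in>I. \<forall>y\<in>I. x + y \<in> I)
     \<and> (\<forall>r\<in>poly_ring A. \<forall>x\<in>I. r * x \<in> I)"

definition prime_ideal :: "'a set \<Rightarrow> ('a, 'k::comm_ring_1) mpoly set \<Rightarrow> bool" where
  "prime_ideal A P \<longleftrightarrow> is_ideal A P \<and> P \<noteq> poly_ring A \<and>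
     (\<forall>a\<in>poly_ring A. \<forall>b\<in>poly_ring A. a * b \<in> P \<longrightarrow> a \<in> P \<or> b \<in> P)"

definition minimal_prime :: "'a set \<Rightarrow> ('a, 'k::comm_ring_1) mpoly set \<Rightarrow> ('a, 'k) mpoly set \<Rightarrow> bool" where
  "minimal_prime A I P \<longleftrightarrow> prime_ideal A P \<and> I \<subseteq> P \<and>
     (\<forall>Q. prime_ideal A Q \<and> I \<subseteq> Q \<and> Q \<subseteq> P \<longrightarrow> Q = P)"

text \<open>For a minimal prime P of I, the P-primary component of I (uniquely determined, the
  same in every primary decomposition) is the contraction of I R_P to R, i.e. the kernel of
  R \<rightarrow> R_P / I R_P.\<close>
definition primary_component :: "'a set \<Rightarrow> ('a, 'k::comm_ring_1) mpoly set \<Rightarrow> ('a, 'k) mpoly set \<Rightarrow> ('a, 'k) mpoly set" where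
  "primary_component A I P = {f \<in> poly_ring A. \<exists>g\<in>poly_ring A - P. g * f \<in> I}"

text \<open>Jet variables x_i^(l) are pairs (i, l). The substitution
  x_i \<mapsto> x_i^(0) + x_i^(1) t + ... + x_i^(s) t^s, as a polynomial in t.\<close>
definition jet_subst :: "nat \<Rightarrow> ('a, 'k::comm_ring_1) mpoly \<Rightarrow> ('a \<times> nat, 'k) mpoly poly" where
  "jet_subst s f = (\<Sum>m\<in>Poly_Mapping.keys f.
      [:Const (Poly_Mapping.lookup f m):] *
      (\<Prod>i\<in>Poly_Mapping.keys m. (\<Sum>l\<le>s. monom (Var (i, l)) l) ^ (Poly_Mapping.lookup m i)))"

text \<open>J_s(R) for R = k[x_v : v in V].\<close>
definition jet_vars :: "nat \<Rightarrow> 'a set \<Rightarrow> ('a \<times> nat) set" where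
  "jet_vars s V = V \<times> {0..s}"

definition jet_ideal :: "nat \<Rightarrow> 'a set \<Rightarrow> ('a, 'k::comm_ring_1) mpoly set \<Rightarrow> ('a \<times> nat, 'k) mpoly set" where
  "jet_ideal s V gens = ideal_gen (jet_vars s V) {coeff (jet_subst s f) l | f l. f \<in> gens \<and> l \<le> s}"

definition jet_set :: "nat \<Rightarrow> 'a set \<Rightarrow> ('a \<times> nat, 'k::comm_ring_1) mpoly set" where
  "jet_set s W = {Var (x, j) | x j. x \<in> W \<and> j \<le> s}"

definition simple_graph :: "'a set \<Rightarrow> 'a set set \<Rightarrow> bool" where
  "simple_graph V E \<longleftrightarrow> finite V \<and> (\<forall>e\<in>E. e \<subseteq> V \<and> card e = 2)"

definition connected_graph :: "'a set \<Rightarrow> 'a set set \<Rightarrow> bool" where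
  "connected_graph V E \<longleftrightarrow>
     (\<forall>u\<in>V. \<forall>v\<in>V. (\<lambda>x y. {x, y} \<in> E)\<^sup>*\<^sup>* u v)"

definition edge_ideal_gens :: "'a set set \<Rightarrow> ('a, 'k::comm_ring_1) mpoly set" where
  "edge_ideal_gens E = {Var x * Var y | x y. {x, y} \<in> E \<and> x \<noteq> y}"

definition edge_ideal :: "'a set \<Rightarrow> 'a set set \<Rightarrow> ('a, 'k::comm_ring_1) mpoly set" where
  "edge_ideal V E = ideal_gen V (edge_ideal_gens E)"

definition vertex_cover :: "'a set \<Rightarrow> 'a set set \<Rightarrow> 'a set \<Rightarrow> bool" where
  "vertex_cover V E W \<longleftrightarrow> W \<subseteq> V \<and> (\<forall>e\<in>E. e \<inter> W \<noteq> {})"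

definition minimal_vertex_cover :: "'a set \<Rightarrow> 'a set set \<Rightarrow> 'a set \<Rightarrow> bool" where
  "minimal_vertex_cover V E W \<longleftrightarrow> vertex_cover V E W \<and> (\<forall>W'. W' \<subset> W \<longrightarrow> \<not> vertex_cover V E W')"

end

theory Submission
  imports Defs
begin

text \<open>The ideal P is generated by variables, so it consists of the polynomials all of whose
  monomials involve a variable x_w^(j) with w in W; this ideal is prime. Every coefficient
  sum_(i<=l) x^(i) y^(l-i) of an edge xy has a factor from W in each term, so J_s(I(G)) lies in P.
  For w in W, minimality of the cover gives a neighbour y outside W, and peeling off the lower
  terms of the coefficients of x_w x_y shows by induction on j that x_w^(j) lies in every prime
  containing J_s(I(G)) but not x_y^(0), and that (x_y^(0))^(j+1) x_w^(j) lies in J_s(I(G)).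
  Since x_y^(0) is not in P, the first fact gives minimality of P, and the product of these
  powers, which avoids P, multiplies all of P into J_s(I(G)), so the P-primary component is P.\<close>

lemma vars_add: "vars (p + q) \<subseteq> vars p \<union> vars q"
  unfolding vars_def using keys_add[of p q] by auto

lemma vars_mult: "vars (p * q) \<subseteq> vars p \<union> vars q"
proof
  fix x assume "x \<in> vars (p * q)"
  then obtain m where m: "m \<in> Poly_Mapping.keys (p * q)" "x \<in> Poly_Mapping.keys m"
    unfolding vars_def by blast
  then obtain a b where "a \<in> Poly_Mapping.keys p" "b \<in> Poly_Mapping.keys q" "m = a + b"
    using keys_mult by blast
  with m keys_add[of a b] show "x \<in> vars p \<union> vars q"
    unfolding vars_def by blast
qed

lemma vars_uminus [simp]: "vars (- p) = vars p"
  unfolding vars_def by simp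

lemma vars_zero [simp]: "vars 0 = {}"
  unfolding vars_def by simp

lemma vars_one [simp]: "vars 1 = {}"
  unfolding vars_def by simp

lemma vars_single: "vars (Poly_Mapping.single m c) \<subseteq> Poly_Mapping.keys m"
  unfolding vars_def by simp

lemma vars_Var [simp]: "vars (Var x :: ('a, 'k::comm_ring_1) mpoly) = {x}"
  unfolding vars_def Var_def by simp

lemma poly_ring_add: "p \<in> poly_ring A \<Longrightarrow> q \<in> poly_ring A \<Longrightarrow> p + q \<in> poly_ring A"
  unfolding poly_ring_def using vars_add[of p q] by auto

lemma poly_ring_mult: "p \<in> poly_ring A \<Longrightarrow> q \<in> poly_ring A \<Longrightarrow> p * q \<in> poly_ring A"
  unfolding poly_ring_def using vars_mult[of p q] by auto

lemma poly_ring_uminus: "p \<in> poly_ring A \<Longrightarrow> - p \<in> poly_ring A"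
  unfolding poly_ring_def by simp

lemma poly_ring_zero [simp]: "0 \<in> poly_ring A"
  unfolding poly_ring_def by simp

lemma poly_ring_one [simp]: "1 \<in> poly_ring A"
  unfolding poly_ring_def by simp

lemma poly_ring_Var: "x \<in> A \<Longrightarrow> Var x \<in> poly_ring A"
  unfolding poly_ring_def by simp

lemma poly_ring_sum: "(\<And>i. i \<in> F \<Longrightarrow> f i \<in> poly_ring A) \<Longrightarrow> sum f F \<in> poly_ring A"
  by (induction F rule: infinite_finite_induct) (auto intro: poly_ring_add)

lemma poly_ring_prod: "(\<And>i. i \<in> F \<Longrightarrow> f i \<in> poly_ring A) \<Longrightarrow> prod f F \<in> poly_ring A"
  by (induction F rule: infinite_finite_induct) (auto intro: poly_ring_mult)

lemma poly_ring_power: "p \<in> poly_ring A \<Longrightarrow> p ^ n \<in> poly_ring A"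
  by (induction n) (auto intro: poly_ring_mult)

lemma ideal_subset_poly_ring: "is_ideal A I \<Longrightarrow> I \<subseteq> poly_ring A"
  by (simp add: is_ideal_def)

lemma ideal_add: "is_ideal A I \<Longrightarrow> x \<in> I \<Longrightarrow> y \<in> I \<Longrightarrow> x + y \<in> I"
  by (simp add: is_ideal_def)

lemma ideal_mult_left: "is_ideal A I \<Longrightarrow> r \<in> poly_ring A \<Longrightarrow> x \<in> I \<Longrightarrow> r * x \<in> I"
  by (simp add: is_ideal_def)

lemma ideal_mult_right: "is_ideal A I \<Longrightarrow> r \<in> poly_ring A \<Longrightarrow> x \<in> I \<Longrightarrow> x * r \<in> I"
  by (simp add: is_ideal_def mult.commute)

lemma ideal_diff: "is_ideal A I \<Longrightarrow> x \<in> I \<Longrightarrow> y \<in> I \<Longrightarrow> x - y \<in> I"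
  using ideal_add[of A I x "- 1 * y"] ideal_mult_left[of A I "- 1" y]
  by (simp add: poly_ring_uminus)

lemma ideal_sum: "is_ideal A I \<Longrightarrow> (\<And>i. i \<in> F \<Longrightarrow> f i \<in> I) \<Longrightarrow> sum f F \<in> I"
  by (induction F rule: infinite_finite_induct) (auto simp: is_ideal_def)

lemma is_ideal_colon:
  assumes "is_ideal A J" "g \<in> poly_ring A"
  shows "is_ideal A {f \<in> poly_ring A. g * f \<in> J}"
  using assms unfolding is_ideal_def
  by (auto intro: poly_ring_add poly_ring_mult simp: distrib_left mult.left_commute)

lemma ideal_gen_superset: "S \<subseteq> ideal_gen A S"
proof
  fix g assume "g \<in> S"
  then show "g \<in> ideal_gen A S"
    unfolding ideal_gen_def by (intro CollectI exI[of _ "{g}"] exI[of _ "\<lambda>_. 1"]) auto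
qed

lemma ideal_gen_least: "is_ideal A I \<Longrightarrow> S \<subseteq> I \<Longrightarrow> ideal_gen A S \<subseteq> I"
  unfolding ideal_gen_def by (auto intro!: ideal_sum ideal_mult_left)

lemma is_ideal_ideal_gen:
  fixes S :: "('a, 'k::comm_ring_1) mpoly set"
  assumes S: "S \<subseteq> poly_ring A"
  shows "is_ideal A (ideal_gen A S)"
  unfolding is_ideal_def
proof (intro conjI ballI)
  show "ideal_gen A S \<subseteq> poly_ring A"
    unfolding ideal_gen_def using S by (auto intro!: poly_ring_sum poly_ring_mult)
  show "0 \<in> ideal_gen A S"
    unfolding ideal_gen_def by (intro CollectI exI[of _ "{}"]) auto
next
  fix x y assume "x \<in> ideal_gen A S" "y \<in> ideal_gen A S"
  then obtain F1 c1 F2 c2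
    where x: "x = (\<Sum>g\<in>F1. c1 g * g)" "finite F1" "F1 \<subseteq> S" "\<forall>g\<in>F1. c1 g \<in> poly_ring A"
      and y: "y = (\<Sum>g\<in>F2. c2 g * g)" "finite F2" "F2 \<subseteq> S" "\<forall>g\<in>F2. c2 g \<in> poly_ring A"
    unfolding ideal_gen_def by blast
  define c where "c g = (if g \<in> F1 then c1 g else 0) + (if g \<in> F2 then c2 g else 0)" for g
  have "(\<Sum>g\<in>F1 \<union> F2. c g * g)
      = (\<Sum>g\<in>F1 \<union> F2. if g \<in> F1 then c1 g * g else 0) + (\<Sum>g\<in>F1 \<union> F2. if g \<in> F2 then c2 g * g else 0)"
    unfolding sum.distrib[symmetric] by (rule sum.cong) (auto simp: c_def distrib_right)
  also have "\<dots> = x + y"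
    using x(2) y(2) by (simp add: x(1) y(1) sum.If_cases Int_absorb1)
  finally have "x + y = (\<Sum>g\<in>F1 \<union> F2. c g * g)" by simp
  moreover have "\<forall>g\<in>F1 \<union> F2. c g \<in> poly_ring A"
    using x y unfolding c_def by (auto intro!: poly_ring_add)
  ultimately show "x + y \<in> ideal_gen A S"
    unfolding ideal_gen_def using x y by blast
next
  fix r x :: "('a, 'k) mpoly"
  assume r: "r \<in> poly_ring A" and "x \<in> ideal_gen A S"
  then obtain F c where x: "x = (\<Sum>g\<in>F. c g * g)" "finite F" "F \<subseteq> S" "\<forall>g\<in>F. c g \<in> poly_ring A"
    unfolding ideal_gen_def by blast
  have "r * x = (\<Sum>g\<in>F. (r * c g) * g)"
    unfolding x(1) by (simp add: sum_distrib_left mult.assoc)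
  moreover have "\<forall>g\<in>F. r * c g \<in> poly_ring A"
    using x r by (auto intro: poly_ring_mult)
  ultimately show "r * x \<in> ideal_gen A S"
    unfolding ideal_gen_def using x(2,3) by (intro CollectI exI[of _ F] exI[of _ "\<lambda>g. r * c g"]) simp
qed

lemma prime_ideal_one_notin: "prime_ideal A P \<Longrightarrow> 1 \<notin> P"
  unfolding prime_ideal_def using ideal_mult_right[of A P _ 1] ideal_subset_poly_ring[of A P]
  by auto

lemma prime_ideal_prod_notin:
  assumes "prime_ideal A P" "\<And>i. i \<in> F \<Longrightarrow> f i \<in> poly_ring A - P"
  shows "prod f F \<in> poly_ring A - P"
  using assms(2)
proof (induction F rule: infinite_finite_induct)
  case (insert x F)
  then have "f x \<in> poly_ring A - P" "prod f F \<in> poly_ring A - P" by auto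
  with insert.hyps assms(1) show ?case
    unfolding prime_ideal_def by (auto intro: poly_ring_mult)
qed (use prime_ideal_one_notin[OF assms(1)] in auto)

text \<open>The product of witnesses outside P for the generators of P is a single witness for all
  of P.\<close>
lemma primary_component_eq_self:
  assumes prime: "prime_ideal A P" and J: "is_ideal A J" "J \<subseteq> P"
    and P: "P = ideal_gen A S" and "finite S"
    and witness: "\<And>x. x \<in> S \<Longrightarrow> \<exists>g \<in> poly_ring A - P. g * x \<in> J"
  shows "primary_component A J P = P"
proof
  show "primary_component A J P \<subseteq> P"
    using prime J(2) unfolding primary_component_def prime_ideal_def by blast
next
  obtain \<gamma> where \<gamma>: "\<And>x. x \<in> S \<Longrightarrow> \<gamma> x \<in> poly_ring A - P \<and> \<gamma> x * x \<in> J"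
    using witness by metis
  define G where "G = (\<Prod>x\<in>S. \<gamma> x)"
  have G: "G \<in> poly_ring A - P"
    unfolding G_def using \<gamma> by (intro prime_ideal_prod_notin[OF prime]) auto
  have "G * x \<in> J" if x: "x \<in> S" for x
  proof -
    have "G * x = (\<Prod>y\<in>S - {x}. \<gamma> y) * (\<gamma> x * x)"
      unfolding G_def using \<open>finite S\<close> x by (simp add: prod.remove mult_ac)
    moreover have "(\<Prod>y\<in>S - {x}. \<gamma> y) \<in> poly_ring A"
      using \<gamma> by (intro poly_ring_prod) auto
    ultimately show ?thesis
      using \<gamma>[OF x] ideal_mult_left[OF J(1)] by simp
  qed
  moreover have "S \<subseteq> poly_ring A"
    using prime ideal_gen_superset[of S A] unfolding P prime_ideal_def is_ideal_def by blast
  ultimately have "ideal_gen A S \<subseteq> {f \<in> poly_ring A. G * f \<in> J}"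
    using G by (intro ideal_gen_least is_ideal_colon J(1)) auto
  then show "P \<subseteq> primary_component A J P"
    using G unfolding P primary_component_def by blast
qed

lemma poly_mapping_sum_single:
  "p = (\<Sum>m\<in>Poly_Mapping.keys p. Poly_Mapping.single m (Poly_Mapping.lookup p m))"
  by (rule poly_mapping_eqI) (simp add: lookup_sum lookup_single when_def in_keys_iff sum.delta)

lemma Max_add_Max_unique:
  fixes F G :: "'b::{ordered_cancel_comm_monoid_add, linorder} set"
  assumes "finite F" "finite G" "a \<in> F" "b \<in> G" and sum: "a + b = Max F + Max G"
  shows "a = Max F \<and> b = Max G"
proof -
  have "a \<le> Max F" "b \<le> Max G"
    using assms by simp_all
  moreover have "\<not> a < Max F"
    using add_less_le_mono[of a "Max F" b "Max G"] \<open>b \<le> Max G\<close> sum by auto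
  ultimately have "a = Max F" by simp
  with sum show ?thesis by simp
qed

text \<open>Finitely many variables can be renamed into nat, where monomials carry a linear order
  compatible with addition.\<close>
lemma additive_embedding_of_monomials:
  fixes Y :: "'a set"
  assumes "finite Y"
  obtains \<mu> :: "('a \<Rightarrow>\<^sub>0 nat) \<Rightarrow> (nat \<Rightarrow>\<^sub>0 nat)"
  where "\<And>a b. \<mu> (a + b) = \<mu> a + \<mu> b" and "inj_on \<mu> {m. Poly_Mapping.keys m \<subseteq> Y}"
proof -
  obtain h where h: "bij_betw h {..<card Y} Y"
    using assms ex_bij_betw_nat_finite lessThan_atLeast0 by metis
  define \<mu> where "\<mu> m = (\<Sum>n<card Y. Poly_Mapping.single n (Poly_Mapping.lookup m (h n)))"
    for m :: "'a \<Rightarrow>\<^sub>0 nat"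
  have lookup_\<mu>: "Poly_Mapping.lookup (\<mu> m) n = Poly_Mapping.lookup m (h n)" if "n < card Y" for m n
    using that by (simp add: \<mu>_def lookup_sum lookup_single when_def)
  have "\<mu> (a + b) = \<mu> a + \<mu> b" for a b
    by (simp add: \<mu>_def lookup_add single_add sum.distrib)
  moreover have "inj_on \<mu> {m. Poly_Mapping.keys m \<subseteq> Y}"
  proof (rule inj_onI, rule poly_mapping_eqI)
    fix a b y assume a: "a \<in> {m. Poly_Mapping.keys m \<subseteq> Y}" and b: "b \<in> {m. Poly_Mapping.keys m \<subseteq> Y}"
      and eq: "\<mu> a = \<mu> b"
    show "Poly_Mapping.lookup a y = Poly_Mapping.lookup b y"
    proof (cases "y \<in> Y")
      case True
      then obtain n where "n < card Y" "y = h n"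
        using h unfolding bij_betw_def by auto
      then show ?thesis using lookup_\<mu> eq by metis
    next
      case False
      with a b have "y \<notin> Poly_Mapping.keys a" "y \<notin> Poly_Mapping.keys b" by auto
      then show ?thesis by (simp add: in_keys_iff)
    qed
  qed
  ultimately show ?thesis by (rule that)
qed

lemma monomials_unique_sum:
  fixes F G :: "('a \<Rightarrow>\<^sub>0 nat) set"
  assumes "finite F" "finite G" "F \<noteq> {}" "G \<noteq> {}"
  obtains a b where "a \<in> F" "b \<in> G"
    and "\<And>a' b'. a' \<in> F \<Longrightarrow> b' \<in> G \<Longrightarrow> a' + b' = a + b \<Longrightarrow> a' = a \<and> b' = b"
proof -
  define Y where "Y = \<Union> (Poly_Mapping.keys ` (F \<union> G))"
  have "finite Y" unfolding Y_def using assms by auto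
  then obtain \<mu> :: "('a \<Rightarrow>\<^sub>0 nat) \<Rightarrow> (nat \<Rightarrow>\<^sub>0 nat)"
    where add: "\<And>a b. \<mu> (a + b) = \<mu> a + \<mu> b" and inj: "inj_on \<mu> {m. Poly_Mapping.keys m \<subseteq> Y}"
    using additive_embedding_of_monomials by blast
  have FG: "F \<union> G \<subseteq> {m. Poly_Mapping.keys m \<subseteq> Y}"
    unfolding Y_def by blast
  have "Max (\<mu> ` F) \<in> \<mu> ` F" "Max (\<mu> ` G) \<in> \<mu> ` G"
    using assms by simp_all
  then obtain a b where a: "a \<in> F" "\<mu> a = Max (\<mu> ` F)" and b: "b \<in> G" "\<mu> b = Max (\<mu> ` G)"
    by (metis imageE)
  show ?thesis
  proof (rule that[OF a(1) b(1)])
    fix a' b' assume a': "a' \<in> F" and b': "b' \<in> G" and sum: "a' + b' = a + b"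
    have "\<mu> a' + \<mu> b' = Max (\<mu> ` F) + Max (\<mu> ` G)"
      using sum add a b by metis
    then have "\<mu> a' = \<mu> a" "\<mu> b' = \<mu> b"
      using Max_add_Max_unique[of "\<mu> ` F" "\<mu> ` G" "\<mu> a'" "\<mu> b'"] a' b' a b assms by auto
    moreover have "a' \<in> {m. Poly_Mapping.keys m \<subseteq> Y}" "a \<in> {m. Poly_Mapping.keys m \<subseteq> Y}"
      "b' \<in> {m. Poly_Mapping.keys m \<subseteq> Y}" "b \<in> {m. Poly_Mapping.keys m \<subseteq> Y}"
      using a' b' a(1) b(1) FG by auto
    ultimately show "a' = a \<and> b' = b"
      using inj_onD[OF inj] by simp
  qed
qed

lemma lookup_mult_unique_sum:
  fixes f g :: "('a, 'k::comm_ring_1) mpoly"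
  assumes "a \<in> Poly_Mapping.keys f" "b \<in> Poly_Mapping.keys g"
    and unique: "\<And>a' b'. a' \<in> Poly_Mapping.keys f \<Longrightarrow> b' \<in> Poly_Mapping.keys g \<Longrightarrow> a' + b' = a + b \<Longrightarrow> a' = a \<and> b' = b"
  shows "Poly_Mapping.lookup (f * g) (a + b) = Poly_Mapping.lookup f a * Poly_Mapping.lookup g b"
proof -
  let ?K = "Poly_Mapping.keys f \<times> Poly_Mapping.keys g"
  let ?c = "\<lambda>p. Poly_Mapping.lookup f (fst p) * Poly_Mapping.lookup g (snd p)"
  have "f * g = (\<Sum>p\<in>?K. Poly_Mapping.single (fst p + snd p) (?c p))"
    by (subst poly_mapping_sum_single[of f], subst poly_mapping_sum_single[of g])
      (simp add: sum_product sum.cartesian_product mult_single case_prod_beta)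
  then have "Poly_Mapping.lookup (f * g) (a + b) = (\<Sum>p\<in>?K. if fst p + snd p = a + b then ?c p else 0)"
    by (simp add: lookup_sum lookup_single when_def)
  also have "\<dots> = (\<Sum>p\<in>?K. if p = (a, b) then ?c (a, b) else 0)"
    by (rule sum.cong) (use unique in auto)
  also have "\<dots> = Poly_Mapping.lookup f a * Poly_Mapping.lookup g b"
    using assms(1,2) by simp
  finally show ?thesis .
qed

definition var_ideal :: "'a set \<Rightarrow> 'a set \<Rightarrow> ('a, 'k::comm_ring_1) mpoly set" where
  "var_ideal A T = {p \<in> poly_ring A. \<forall>m\<in>Poly_Mapping.keys p. \<exists>t\<in>T. Poly_Mapping.lookup m t \<noteq> 0}"

lemma is_ideal_var_ideal: "is_ideal A (var_ideal A T :: ('a, 'k::comm_ring_1) mpoly set)"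
  unfolding is_ideal_def
proof (intro conjI ballI)
  show "var_ideal A T \<subseteq> poly_ring A" "0 \<in> var_ideal A T"
    unfolding var_ideal_def by auto
next
  fix x y :: "('a, 'k) mpoly" assume "x \<in> var_ideal A T" "y \<in> var_ideal A T"
  then show "x + y \<in> var_ideal A T"
    unfolding var_ideal_def using keys_add[of x y] by (auto intro: poly_ring_add)
next
  fix r x :: "('a, 'k) mpoly" assume r: "r \<in> poly_ring A" and x: "x \<in> var_ideal A T"
  have "\<exists>t\<in>T. Poly_Mapping.lookup m t \<noteq> 0" if m: "m \<in> Poly_Mapping.keys (r * x)" for m
  proof -
    obtain a b where "b \<in> Poly_Mapping.keys x" "m = a + b"
      using keys_mult[of r x] m by blast
    then show ?thesis
      using x unfolding var_ideal_def by (auto simp: lookup_add)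
  qed
  then show "r * x \<in> var_ideal A T"
    using r x unfolding var_ideal_def by (auto intro: poly_ring_mult)
qed

lemma Var_in_var_ideal: "t \<in> T \<Longrightarrow> t \<in> A \<Longrightarrow> Var t \<in> var_ideal A T"
  unfolding var_ideal_def Var_def poly_ring_def vars_def by (auto intro!: bexI[of _ t])

lemma Var_notin_var_ideal: "t \<notin> T \<Longrightarrow> Var t \<notin> var_ideal A T"
  unfolding var_ideal_def Var_def by (auto simp: lookup_single when_def)

lemma ideal_gen_Var_eq_var_ideal:
  assumes "T \<subseteq> A"
  shows "ideal_gen A {Var t | t. t \<in> T} = (var_ideal A T :: ('a, 'k::comm_ring_1) mpoly set)"
proof
  show "ideal_gen A {Var t | t. t \<in> T} \<subseteq> (var_ideal A T :: ('a, 'k) mpoly set)"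
    using assms by (intro ideal_gen_least is_ideal_var_ideal) (auto intro: Var_in_var_ideal)
next
  let ?I = "ideal_gen A {Var t | t. t \<in> T} :: ('a, 'k) mpoly set"
  have I: "is_ideal A ?I"
    using assms by (intro is_ideal_ideal_gen) (auto intro: poly_ring_Var)
  show "var_ideal A T \<subseteq> ?I"
  proof
    fix p :: "('a, 'k) mpoly" assume p: "p \<in> var_ideal A T"
    have "Poly_Mapping.single m (Poly_Mapping.lookup p m) \<in> ?I" if m: "m \<in> Poly_Mapping.keys p" for m
    proof -
      obtain t where t: "t \<in> T" "Poly_Mapping.lookup m t \<noteq> 0"
        using p m unfolding var_ideal_def by blast
      define m' where "m' = m - Poly_Mapping.single t 1"
      have "m' + Poly_Mapping.single t 1 = m"
        using t by (intro poly_mapping_eqI) (auto simp: m'_def lookup_add lookup_minus lookup_single when_def)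
      then have split: "Poly_Mapping.single m (Poly_Mapping.lookup p m)
          = Poly_Mapping.single m' (Poly_Mapping.lookup p m) * Var t"
        unfolding Var_def mult_single by simp
      have "Poly_Mapping.keys m' \<subseteq> Poly_Mapping.keys m"
        by (auto simp: m'_def in_keys_iff lookup_minus)
      moreover have "Poly_Mapping.keys m \<subseteq> A"
        using p m unfolding var_ideal_def poly_ring_def vars_def by auto
      ultimately have "Poly_Mapping.single m' (Poly_Mapping.lookup p m) \<in> poly_ring A"
        using vars_single[of m' "Poly_Mapping.lookup p m"] unfolding poly_ring_def by blast
      moreover have "Var t \<in> ?I"
        using t ideal_gen_superset[of "{Var t | t. t \<in> T}" A] by auto
      ultimately show ?thesis
        unfolding split by (rule ideal_mult_left[OF I])
    qed
    then have "(\<Sum>m\<in>Poly_Mapping.keys p. Poly_Mapping.single m (Poly_Mapping.lookup p m)) \<in> ?I"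
      by (rule ideal_sum[OF I])
    then show "p \<in> ?I"
      using poly_mapping_sum_single[of p] by simp
  qed
qed

text \<open>The leading monomials (for a suitable order) of the T-free parts of a and b multiply to a
  T-free monomial of a * b with nonzero coefficient.\<close>
lemma prime_ideal_var_ideal: "prime_ideal A (var_ideal A T :: ('a, 'k::idom) mpoly set)"
  unfolding prime_ideal_def
proof (intro conjI ballI impI)
  show "is_ideal A (var_ideal A T :: ('a, 'k) mpoly set)"
    by (rule is_ideal_var_ideal)
  have "(1 :: ('a, 'k) mpoly) \<notin> var_ideal A T"
    unfolding var_ideal_def by simp
  then show "(var_ideal A T :: ('a, 'k) mpoly set) \<noteq> poly_ring A"
    using poly_ring_one by blast
next
  fix a b :: "('a, 'k) mpoly"
  assume "a \<in> poly_ring A" "b \<in> poly_ring A" and ab: "a * b \<in> var_ideal A T"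
  let ?free = "\<lambda>m. \<forall>t\<in>T. Poly_Mapping.lookup m t = 0"
  show "a \<in> var_ideal A T \<or> b \<in> var_ideal A T"
  proof (rule ccontr)
    assume neither: "\<not> (a \<in> var_ideal A T \<or> b \<in> var_ideal A T)"
    define F where "F = {m \<in> Poly_Mapping.keys a. ?free m}"
    define G where "G = {m \<in> Poly_Mapping.keys b. ?free m}"
    have "finite F" "finite G" "F \<noteq> {}" "G \<noteq> {}"
      using neither \<open>a \<in> poly_ring A\<close> \<open>b \<in> poly_ring A\<close>
      unfolding F_def G_def var_ideal_def by auto
    then obtain a0 b0 where a0: "a0 \<in> F" and b0: "b0 \<in> G"
      and unique: "\<And>a' b'. a' \<in> F \<Longrightarrow> b' \<in> G \<Longrightarrow> a' + b' = a0 + b0 \<Longrightarrow> a' = a0 \<and> b' = b0"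
      by (rule monomials_unique_sum) blast
    have free: "?free (a0 + b0)"
      using a0 b0 unfolding F_def G_def by (simp add: lookup_add)
    have "Poly_Mapping.lookup (a * b) (a0 + b0) = Poly_Mapping.lookup a a0 * Poly_Mapping.lookup b b0"
    proof (rule lookup_mult_unique_sum)
      fix a' b' assume a'b': "a' \<in> Poly_Mapping.keys a" "b' \<in> Poly_Mapping.keys b" "a' + b' = a0 + b0"
      have "\<forall>t\<in>T. Poly_Mapping.lookup a' t + Poly_Mapping.lookup b' t = 0"
        using free by (simp add: a'b'(3)[symmetric] lookup_add)
      then have "a' \<in> F" "b' \<in> G"
        using a'b'(1,2) unfolding F_def G_def by auto
      then show "a' = a0 \<and> b' = b0"
        using unique a'b'(3) by blast
    qed (use a0 b0 in \<open>auto simp: F_def G_def\<close>)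
    also have "\<dots> \<noteq> 0"
      using a0 b0 unfolding F_def G_def by (auto simp: in_keys_iff)
    finally have "a0 + b0 \<in> Poly_Mapping.keys (a * b)"
      by (simp add: in_keys_iff)
    with ab free show False
      unfolding var_ideal_def by auto
  qed
qed

definition jet_poly :: "nat \<Rightarrow> 'a \<Rightarrow> ('a \<times> nat, 'k::comm_ring_1) mpoly poly" where
  "jet_poly s v = (\<Sum>l\<le>s. monom (Var (v, l)) l)"

lemma coeff_jet_poly: "coeff (jet_poly s v) i = (if i \<le> s then Var (v, i) else 0)"
  unfolding jet_poly_def by (simp add: coeff_sum coeff_monom)

lemma jet_subst_Var_mult_Var:
  assumes "x \<noteq> y"
  shows "jet_subst s (Var x * Var y :: ('a, 'k::comm_ring_1) mpoly) = jet_poly s x * jet_poly s y"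
proof -
  define m where "m = Poly_Mapping.single x (1::nat) + Poly_Mapping.single y 1"
  have "(Var x * Var y :: ('a, 'k) mpoly) = Poly_Mapping.single m 1"
    unfolding Var_def m_def by (simp add: mult_single)
  moreover have "Poly_Mapping.keys m = {x, y}"
    using assms by (auto simp: m_def in_keys_iff lookup_add lookup_single when_def split: if_splits)
  moreover have "Poly_Mapping.lookup m x = 1" "Poly_Mapping.lookup m y = 1"
    using assms by (auto simp: m_def lookup_add lookup_single when_def)
  moreover have "(Const 1 :: ('a \<times> nat, 'k) mpoly) = 1"
    unfolding Const_def by simp
  ultimately show ?thesis
    unfolding jet_subst_def using assms by (simp add: jet_poly_def one_pCons[symmetric])
qed

definition jet_edge_gen :: "'a \<Rightarrow> 'a \<Rightarrow> nat \<Rightarrow> ('a \<times> nat, 'k::comm_ring_1) mpoly" where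
  "jet_edge_gen x y l = (\<Sum>i\<le>l. Var (x, i) * Var (y, l - i))"

definition jet_edge_gens :: "nat \<Rightarrow> 'a set set \<Rightarrow> ('a \<times> nat, 'k::comm_ring_1) mpoly set" where
  "jet_edge_gens s E = {jet_edge_gen x y l | x y l. {x, y} \<in> E \<and> x \<noteq> y \<and> l \<le> s}"

lemma coeff_jet_subst_Var_mult_Var:
  assumes "x \<noteq> y" "l \<le> s"
  shows "coeff (jet_subst s (Var x * Var y :: ('a, 'k::comm_ring_1) mpoly)) l = jet_edge_gen x y l"
  unfolding jet_subst_Var_mult_Var[OF assms(1)] coeff_mult jet_edge_gen_def using assms(2)
  by (intro sum.cong) (auto simp: coeff_jet_poly)

lemma jet_ideal_edge_ideal_gens:
  "jet_ideal s V (edge_ideal_gens E :: ('a, 'k::comm_ring_1) mpoly set)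
     = ideal_gen (jet_vars s V) (jet_edge_gens s E)"
proof -
  have "{coeff (jet_subst s f) l | f l. f \<in> (edge_ideal_gens E :: ('a, 'k) mpoly set) \<and> l \<le> s}
      = jet_edge_gens s E" (is "?C = _")
  proof
    show "?C \<subseteq> jet_edge_gens s E"
      unfolding edge_ideal_gens_def jet_edge_gens_def
      by (force simp: coeff_jet_subst_Var_mult_Var)
    show "jet_edge_gens s E \<subseteq> ?C"
    proof
      fix g :: "('a \<times> nat, 'k) mpoly" assume "g \<in> jet_edge_gens s E"
      then obtain x y l where "g = jet_edge_gen x y l" "{x, y} \<in> E" "x \<noteq> y" "l \<le> s"
        unfolding jet_edge_gens_def by blast
      then have "g = coeff (jet_subst s (Var x * Var y :: ('a, 'k) mpoly)) l \<and>
          Var x * Var y \<in> (edge_ideal_gens E :: ('a, 'k) mpoly set) \<and> l \<le> s"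
        unfolding edge_ideal_gens_def by (auto simp: coeff_jet_subst_Var_mult_Var)
      then show "g \<in> ?C" by blast
    qed
  qed
  then show ?thesis
    unfolding jet_ideal_def by simp
qed

lemma jet_edge_gen_split:
  "jet_edge_gen x y j = (\<Sum>i<j. Var (x, i) * Var (y, j - i)) + Var (x, j) * Var (y, 0)"
  unfolding jet_edge_gen_def lessThan_Suc_atMost[symmetric] by simp

lemma Var_in_poly_ring_jet_vars: "x \<in> V \<Longrightarrow> i \<le> s \<Longrightarrow> Var (x, i) \<in> poly_ring (jet_vars s V)"
  unfolding jet_vars_def by (intro poly_ring_Var) auto

text \<open>Modulo the lower jet variables of x, the generator of degree j is Var (x, j) * Var (y, 0).\<close>
lemma jet_Var_in_prime:
  fixes Q :: "('a \<times> nat, 'k::comm_ring_1) mpoly set"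
  assumes Q: "prime_ideal (jet_vars s V) Q" and "x \<in> V" "y \<in> V"
    and gens: "\<And>l. l \<le> s \<Longrightarrow> jet_edge_gen x y l \<in> Q" and y: "Var (y, 0) \<notin> Q" and "j \<le> s"
  shows "Var (x, j) \<in> Q"
  using \<open>j \<le> s\<close>
proof (induction j rule: less_induct)
  case (less j)
  have ideal: "is_ideal (jet_vars s V) Q"
    using Q unfolding prime_ideal_def by blast
  have "Var (x, i) * Var (y, j - i) \<in> Q" if "i < j" for i
    using that less \<open>y \<in> V\<close> by (intro ideal_mult_right[OF ideal] Var_in_poly_ring_jet_vars) auto
  then have "(\<Sum>i<j. Var (x, i) * Var (y, j - i)) \<in> Q"
    by (intro ideal_sum[OF ideal]) simp
  with gens[OF less.prems] have "jet_edge_gen x y j - (\<Sum>i<j. Var (x, i) * Var (y, j - i)) \<in> Q"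
    by (rule ideal_diff[OF ideal])
  then have "Var (x, j) * Var (y, 0) \<in> Q"
    unfolding jet_edge_gen_split by simp
  moreover have "Var (x, j) \<in> poly_ring (jet_vars s V)" "Var (y, 0) \<in> poly_ring (jet_vars s V)"
    using less.prems \<open>x \<in> V\<close> \<open>y \<in> V\<close> by (auto intro: Var_in_poly_ring_jet_vars)
  ultimately show ?case
    using Q y unfolding prime_ideal_def by blast
qed

lemma power_Var_mult_jet_Var_in_ideal:
  fixes J :: "('a \<times> nat, 'k::comm_ring_1) mpoly set"
  assumes J: "is_ideal (jet_vars s V) J" and "x \<in> V" "y \<in> V"
    and gens: "\<And>l. l \<le> s \<Longrightarrow> jet_edge_gen x y l \<in> J" and "j \<le> s"
  shows "Var (y, 0) ^ Suc j * Var (x, j) \<in> J"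
  using \<open>j \<le> s\<close>
proof (induction j rule: less_induct)
  case (less j)
  define b where "b = (Var (y, 0) :: ('a \<times> nat, 'k) mpoly)"
  have b: "b \<in> poly_ring (jet_vars s V)"
    unfolding b_def using \<open>y \<in> V\<close> by (intro Var_in_poly_ring_jet_vars) auto
  have "b ^ j * (Var (x, i) * Var (y, j - i)) \<in> J" if "i < j" for i
  proof -
    have "b ^ j = b ^ (j - Suc i) * b ^ Suc i"
      unfolding power_add[symmetric] using that by simp
    then have "b ^ j * (Var (x, i) * Var (y, j - i)) = (b ^ (j - Suc i) * Var (y, j - i)) * (b ^ Suc i * Var (x, i))"
      by (simp add: algebra_simps)
    moreover have "b ^ Suc i * Var (x, i) \<in> J"
      using less that unfolding b_def by simp
    moreover have "b ^ (j - Suc i) * Var (y, j - i) \<in> poly_ring (jet_vars s V)"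
      using b \<open>y \<in> V\<close> less.prems by (intro poly_ring_mult poly_ring_power Var_in_poly_ring_jet_vars) auto
    ultimately show ?thesis
      using ideal_mult_left[OF J] by simp
  qed
  then have "b ^ j * (\<Sum>i<j. Var (x, i) * Var (y, j - i)) \<in> J"
    unfolding sum_distrib_left by (intro ideal_sum[OF J]) simp
  moreover have "b ^ j * jet_edge_gen x y j \<in> J"
    using gens[OF less.prems] b by (intro ideal_mult_left[OF J] poly_ring_power)
  ultimately have "b ^ j * jet_edge_gen x y j - b ^ j * (\<Sum>i<j. Var (x, i) * Var (y, j - i)) \<in> J"
    by (rule ideal_diff[OF J, rotated])
  then show ?case
    unfolding jet_edge_gen_split b_def by (simp add: algebra_simps)
qed

lemma minimal_vertex_cover_outside_neighbour:
  assumes "simple_graph V E" "minimal_vertex_cover V E W" "w \<in> W"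
  obtains y where "{w, y} \<in> E" "w \<noteq> y" "y \<notin> W"
proof -
  have "\<not> vertex_cover V E (W - {w})" "W \<subseteq> V"
    using assms(2,3) unfolding minimal_vertex_cover_def vertex_cover_def by auto
  then obtain e where e: "e \<in> E" "e \<inter> (W - {w}) = {}"
    unfolding vertex_cover_def by auto
  moreover have "e \<inter> W \<noteq> {}"
    using e(1) assms(2) unfolding minimal_vertex_cover_def vertex_cover_def by blast
  ultimately have "w \<in> e" by blast
  obtain a b where ab: "e = {a, b}" "a \<noteq> b"
    using e(1) assms(1) unfolding simple_graph_def by (meson card_2_iff)
  show ?thesis
  proof (cases "a = w")
    case True
    with ab e show ?thesis by (intro that[of b]) auto
  next
    case False
    with ab \<open>w \<in> e\<close> have "b = w" by blast
    with ab e False show ?thesis by (intro that[of a]) (auto simp: insert_commute)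
  qed
qed

lemma prime_ideal_power_notin:
  "prime_ideal A P \<Longrightarrow> b \<in> poly_ring A - P \<Longrightarrow> b ^ n \<in> poly_ring A - P"
  using prime_ideal_prod_notin[of A P "{..<n}" "\<lambda>_. b"] by simp

lemma finite_jet_set: "finite W \<Longrightarrow> finite (jet_set s W)"
proof -
  assume "finite W"
  have "jet_set s W = Var ` (W \<times> {..s})"
    unfolding jet_set_def by auto
  with \<open>finite W\<close> show ?thesis
    by (metis finite_atMost finite_cartesian_product finite_imageI)
qed

lemma ideal_gen_jet_set:
  assumes "W \<subseteq> V"
  shows "ideal_gen (jet_vars s V) (jet_set s W)
    = (var_ideal (jet_vars s V) (W \<times> {0..s}) :: ('a \<times> nat, 'k::comm_ring_1) mpoly set)"
proof -
  have jet_set: "jet_set s W = {Var t | t. t \<in> W \<times> {0..s}}"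
    unfolding jet_set_def by auto
  have "W \<times> {0..s} \<subseteq> jet_vars s V"
    using assms unfolding jet_vars_def by auto
  then show ?thesis
    unfolding jet_set by (rule ideal_gen_Var_eq_var_ideal)
qed

lemma simple_graph_edge_vertices:
  "simple_graph V E \<Longrightarrow> {x, y} \<in> E \<Longrightarrow> x \<in> V \<and> y \<in> V"
  unfolding simple_graph_def by blast

lemma jet_edge_gens_subset_poly_ring:
  assumes "simple_graph V E"
  shows "jet_edge_gens s E \<subseteq> poly_ring (jet_vars s V)"
proof
  fix g assume "g \<in> jet_edge_gens s E"
  then obtain x y l where "g = jet_edge_gen x y l" "{x, y} \<in> E" "l \<le> s"
    unfolding jet_edge_gens_def by blast
  with simple_graph_edge_vertices[OF assms] show "g \<in> poly_ring (jet_vars s V)"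
    unfolding jet_edge_gen_def by (auto intro!: poly_ring_sum poly_ring_mult Var_in_poly_ring_jet_vars)
qed

lemma jet_edge_gens_subset_var_ideal:
  assumes "simple_graph V E" "vertex_cover V E W"
  shows "jet_edge_gens s E \<subseteq> var_ideal (jet_vars s V) (W \<times> {0..s})"
proof
  let ?P = "var_ideal (jet_vars s V) (W \<times> {0..s})"
  fix g assume "g \<in> jet_edge_gens s E"
  then obtain x y l where g: "g = jet_edge_gen x y l" "{x, y} \<in> E" "l \<le> s"
    unfolding jet_edge_gens_def by blast
  have V: "x \<in> V" "y \<in> V"
    using simple_graph_edge_vertices[OF assms(1) g(2)] by auto
  have "{x, y} \<inter> W \<noteq> {}"
    using assms(2) g(2) unfolding vertex_cover_def by blast
  then have W: "x \<in> W \<or> y \<in> W" by blast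
  have "Var (x, i) * Var (y, l - i) \<in> ?P" if "i \<le> l" for i
  proof -
    have x: "Var (x, i) \<in> poly_ring (jet_vars s V)" and y: "Var (y, l - i) \<in> poly_ring (jet_vars s V)"
      using V that g(3) by (auto intro: Var_in_poly_ring_jet_vars)
    from W show ?thesis
    proof
      assume "x \<in> W"
      then have "Var (x, i) \<in> ?P"
        using V that g(3) by (intro Var_in_var_ideal) (auto simp: jet_vars_def)
      then show ?thesis by (rule ideal_mult_right[OF is_ideal_var_ideal y])
    next
      assume "y \<in> W"
      then have "Var (y, l - i) \<in> ?P"
        using V that g(3) by (intro Var_in_var_ideal) (auto simp: jet_vars_def)
      then show ?thesis by (rule ideal_mult_left[OF is_ideal_var_ideal x])
    qed
  qed
  then show "g \<in> ?P"
    unfolding g(1) jet_edge_gen_def by (intro ideal_sum[OF is_ideal_var_ideal]) simp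
qed

lemma jet_edge_gen_in_jet_edge_gens:
  "{x, y} \<in> E \<Longrightarrow> x \<noteq> y \<Longrightarrow> l \<le> s \<Longrightarrow> jet_edge_gen x y l \<in> jet_edge_gens s E"
  unfolding jet_edge_gens_def by blast

text \<open>The neighbour y of w outside the cover has Var (y, 0) outside every prime below the cover
  ideal, which forces all jet variables of w into such a prime.\<close>
lemma jet_set_subset_prime_below_cover_ideal:
  fixes Q :: "('a \<times> nat, 'k::comm_ring_1) mpoly set"
  assumes "simple_graph V E" "minimal_vertex_cover V E W"
    and Q: "prime_ideal (jet_vars s V) Q" "jet_edge_gens s E \<subseteq> Q"
      "Q \<subseteq> var_ideal (jet_vars s V) (W \<times> {0..s})"
  shows "jet_set s W \<subseteq> Q"
proof
  fix g :: "('a \<times> nat, 'k) mpoly" assume "g \<in> jet_set s W"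
  then obtain w j where g: "g = Var (w, j)" "w \<in> W" "j \<le> s"
    unfolding jet_set_def by blast
  obtain y where y: "{w, y} \<in> E" "w \<noteq> y" "y \<notin> W"
    using minimal_vertex_cover_outside_neighbour[OF assms(1,2) g(2)] .
  have "w \<in> V" "y \<in> V"
    using simple_graph_edge_vertices[OF assms(1) y(1)] by auto
  moreover have "jet_edge_gen w y l \<in> Q" if "l \<le> s" for l
    using jet_edge_gen_in_jet_edge_gens[OF y(1,2) that] Q(2) by blast
  moreover have "Var (y, 0) \<notin> Q"
    using Q(3) Var_notin_var_ideal[of "(y, 0)" "W \<times> {0..s}"] y(3) by blast
  ultimately show "g \<in> Q"
    unfolding g(1) using jet_Var_in_prime[OF Q(1)] g(3) by blast
qed

lemma jet_set_witness_outside_cover_ideal: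
  assumes "simple_graph V E" "minimal_vertex_cover V E W" "x \<in> jet_set s W"
  shows "\<exists>g \<in> poly_ring (jet_vars s V) - (var_ideal (jet_vars s V) (W \<times> {0..s}) :: ('a \<times> nat, 'k::idom) mpoly set).
           g * x \<in> ideal_gen (jet_vars s V) (jet_edge_gens s E)"
proof -
  obtain w j where x: "x = Var (w, j)" "w \<in> W" "j \<le> s"
    using assms(3) unfolding jet_set_def by blast
  obtain y where y: "{w, y} \<in> E" "w \<noteq> y" "y \<notin> W"
    using minimal_vertex_cover_outside_neighbour[OF assms(1,2) x(2)] .
  have V: "w \<in> V" "y \<in> V"
    using simple_graph_edge_vertices[OF assms(1) y(1)] by auto
  have J: "is_ideal (jet_vars s V) (ideal_gen (jet_vars s V) (jet_edge_gens s E) :: ('a \<times> nat, 'k) mpoly set)"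
    using jet_edge_gens_subset_poly_ring[OF assms(1)] by (rule is_ideal_ideal_gen)
  have "Var (y, 0) \<in> poly_ring (jet_vars s V) - (var_ideal (jet_vars s V) (W \<times> {0..s}) :: ('a \<times> nat, 'k) mpoly set)"
    using V y(3) Var_notin_var_ideal[of "(y, 0)" "W \<times> {0..s}"] by (auto intro: Var_in_poly_ring_jet_vars)
  then have "Var (y, 0) ^ Suc j \<in> poly_ring (jet_vars s V) - (var_ideal (jet_vars s V) (W \<times> {0..s}) :: ('a \<times> nat, 'k) mpoly set)"
    by (rule prime_ideal_power_notin[OF prime_ideal_var_ideal])
  moreover have "jet_edge_gen w y l \<in> ideal_gen (jet_vars s V) (jet_edge_gens s E)" if "l \<le> s" for l
    using jet_edge_gen_in_jet_edge_gens[OF y(1,2) that] ideal_gen_superset by blast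
  then have "Var (y, 0) ^ Suc j * x \<in> ideal_gen (jet_vars s V) (jet_edge_gens s E)"
    unfolding x(1) using power_Var_mult_jet_Var_in_ideal[OF J V] x(3) by blast
  ultimately show ?thesis ..
qed

theorem mainTheorem4:
  fixes V :: "'v set" and E :: "'v set set" and W :: "'v set" and s :: nat
  assumes "simple_graph V E" and "connected_graph V E" and "E \<noteq> {}"
    and "minimal_vertex_cover V E W"
  defines "J \<equiv> jet_ideal s V (edge_ideal_gens E :: ('v, 'k::field) mpoly set)"
    and "P \<equiv> ideal_gen (jet_vars s V) (jet_set s W :: ('v \<times> nat, 'k) mpoly set)"
  shows "minimal_prime (jet_vars s V) J P \<and> primary_component (jet_vars s V) J P = P"
proof -
  let ?A = "jet_vars s V"
  have "vertex_cover V E W" "W \<subseteq> V" "finite W"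
    using assms(1,4) finite_subset unfolding minimal_vertex_cover_def vertex_cover_def simple_graph_def
    by auto
  have J: "J = ideal_gen ?A (jet_edge_gens s E)"
    unfolding J_def by (rule jet_ideal_edge_ideal_gens)
  have J_ideal: "is_ideal ?A J"
    unfolding J using assms(1) by (intro is_ideal_ideal_gen jet_edge_gens_subset_poly_ring)
  have P: "P = var_ideal ?A (W \<times> {0..s})"
    unfolding P_def using \<open>W \<subseteq> V\<close> by (rule ideal_gen_jet_set)
  have prime: "prime_ideal ?A P"
    unfolding P by (rule prime_ideal_var_ideal)
  have "J \<subseteq> P"
    unfolding J P using assms(1) \<open>vertex_cover V E W\<close>
    by (intro ideal_gen_least is_ideal_var_ideal jet_edge_gens_subset_var_ideal)
  have "Q = P" if Q: "prime_ideal ?A Q" "J \<subseteq> Q" "Q \<subseteq> P" for Q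
  proof -
    have "jet_set s W \<subseteq> Q"
      using assms(1,4) Q ideal_gen_superset unfolding J P by (intro jet_set_subset_prime_below_cover_ideal) blast+
    moreover have "is_ideal ?A Q"
      using Q(1) unfolding prime_ideal_def by blast
    ultimately have "P \<subseteq> Q"
      unfolding P_def by (intro ideal_gen_least)
    with Q(3) show ?thesis by blast
  qed
  then have "minimal_prime ?A J P"
    unfolding minimal_prime_def using prime \<open>J \<subseteq> P\<close> by blast
  moreover have "primary_component ?A J P = P"
  proof (rule primary_component_eq_self[OF prime J_ideal \<open>J \<subseteq> P\<close>])
    show "P = ideal_gen ?A (jet_set s W)"
      unfolding P_def ..
    show "finite (jet_set s W)"
      using \<open>finite W\<close> by (rule finite_jet_set)
    show "\<exists>g \<in> poly_ring ?A - P. g * x \<in> J" if "x \<in> jet_set s W" for x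
      unfolding J P using jet_set_witness_outside_cover_ideal[OF assms(1,4) that] .
  qed
  ultimately show ?thesis ..
qed

end
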